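(* Let $c\ge 1$ be the number of labels, $f$ a base multi-label classifier, $1\le k'\le c$, $1\le k\le c$, $\sigma>0$, and $\mathbf{x}\in\mathbb{R}^m$. Let $L(\mathbf{x})=\{a_1,\dots,a_d\}\subseteq\{1,\dots,c\}$ be a set of $d\ge1$ labels. Suppose we are given numbers $\underline{p_{i}}\in[0,1]$ for $i\in L(\mathbf{x})$ with $\underline{p_i}\le p_i$, and numbers $\overline{p}_j\in[0,1]$ for $j\in\{1,\dots,c\}\setminus L(\mathbf{x})$ with $p_j\le\overline{p}_j$. Index so that $\underline{p_{a_1}}\ge\cdots\ge\underline{p_{a_d}}$, and let $b_1,\dots,b_{c-d}$ be an enumeration of $\{1,\dots,c\}\setminus L(\mathbf{x})$ with $\overline{p}_{b_1}\ge\overline{p}_{b_2}\ge\cdots\ge\overline{p}_{b_{c-d}}$ (ties broken arbitrarily); by convention $\overline{p}_{b_l}:=0$ for $l>c-d$. For $e'\in\{1,\dots,\min\{d,k\}\}$ set $\eta=d-e'+1$, $s=k-e'+1$, $\underline{p_{A_u}}=\sum_{l=e'}^{e'+u-1}\underline{p_{a_l}}$ for $1\le u\le\eta$, and $\overline{p}_{B_v}=\sum_{l=s-v+1}^{s}\overline{p}_{b_l}$ for $1\le v\le s$, and assume $\overline{p}_{B_v}\le k'$ for all such $v$. Let $R\ge 0$ and let $e$ be the largest $e'\in\{1,\dots,\min\{d,k\}\}$ satisfying $$\max\Big\{\Phi\big(\Phi^{-1}(\underline{p_{a_{e'}}})-\tfrac{R}{\sigma}\big),\ \max_{u=1}^{\eta}\tfrac{k'}{u}\,\Phi\big(\Phi^{-1}(\tfrac{\underline{p_{A_u}}}{k'})-\tfrac{R}{\sigma}\big)\Big\}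 > \min\Big\{\Phi\big(\Phi^{-1}(\overline{p}_{b_s})+\tfrac{R}{\sigma}\big),\ \min_{v=1}^{s}\tfrac{k'}{v}\,\Phi\big(\Phi^{-1}(\tfrac{\overline{p}_{B_v}}{k'})+\tfrac{R}{\sigma}\big)\Big\},$$ or $e=0$ if no such $e'$ exists. Then for every perturbation $\delta\in\mathbb{R}^m$ with $\|\delta\|_2\le R$, $$|L(\mathbf{x})\cap g_k(\mathbf{x}+\delta)|\ge e .$$
   Context: A base multi-label classifier $f$ with parameter $k'$ assigns to every input $\mathbf{w}\in\mathbb{R}^m$ a set $f_{k'}(\mathbf{w})\subseteq\{1,\dots,c\}$ of exactly $k'$ labels (measurably in $\mathbf{w}$). Let $\epsilon\sim\mathcal{N}(0,\sigma^2 I)$ be isotropic Gaussian noise. The label probability of label $i$ at input $\mathbf{x}$ is $p_i=\Pr(i\in f_{k'}(\mathbf{x}+\epsilon))$; in general, for any input $\mathbf{z}$, write $p_i(\mathbf{z})=\Pr(i\in f_{k'}(\mathbf{z}+\epsilon))$, so $p_i=p_i(\mathbf{x})$. The smoothed multi-label classifier $g$ outputs $g_k(\mathbf{z})$, the set of $k$ labels with the largest values of $p_i(\mathbf{z})$ (ties broken arbitrarily). $\Phi$ is the standard normal CDF and $\Phi^{-1}$ its inverse, with conventions $\Phi^{-1}(0)=-\infty$, $\Phi^{-1}(1)=+\infty$, $\Phi(-\infty)=0$, $\Phi(+\infty)=1$. *)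

theory Defs
  imports "HOL-Probability.Probability"
begin

definition Phi :: "real \<Rightarrow> real" where
  "Phi = cdf (density lborel std_normal_density)"

definition Phi_inv :: "real \<Rightarrow> real" where
  "Phi_inv p = (THE x. Phi x = p)"

text \<open>Phi (Phi_inv p + t) for p in [0,1], with the conventions
  Phi_inv 0 = -infinity, Phi_inv 1 = +infinity, Phi(-infinity) = 0, Phi(+infinity) = 1
  (t is always a finite real).\<close>
definition Phi_shift :: "real \<Rightarrow> real \<Rightarrow> real" where
  "Phi_shift p t = (if p \<le> 0 then 0 else if p \<ge> 1 then 1 else Phi (Phi_inv p + t))"

definition gauss :: "real \<Rightarrow> 'a::euclidean_space measure" where
  "gauss \<sigma> = density lborel (\<lambda>y. ennreal ((2 * pi * \<sigma>\<^sup>2) powr (- real DIM('a) / 2)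
                                          * exp (- (norm y)\<^sup>2 / (2 * \<sigma>\<^sup>2))))"

definition label_prob :: "('a::euclidean_space \<Rightarrow> nat set) \<Rightarrow> real \<Rightarrow> 'a \<Rightarrow> nat \<Rightarrow> real" where
  "label_prob f \<sigma> z i = measure (gauss \<sigma>) {\<epsilon>. i \<in> f (z + \<epsilon>)}"

text \<open>G is a possible output of the smoothed classifier g_k at z (ties broken arbitrarily):
  a set of k labels among {1..c} whose label probabilities are the k largest.\<close>
definition is_smoothed_output ::
  "nat \<Rightarrow> ('a::euclidean_space \<Rightarrow> nat set) \<Rightarrow> real \<Rightarrow> nat \<Rightarrow> 'a \<Rightarrow> nat set \<Rightarrow> bool" where
  "is_smoothed_output c f \<sigma> k z G \<longleftrightarrow>
     G \<subseteq> {1..c} \<and> card G = k \<and>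
     (\<forall>i\<in>G. \<forall>j\<in>{1..c} - G. label_prob f \<sigma> z j \<le> label_prob f \<sigma> z i)"

definition pbar :: "nat \<Rightarrow> nat \<Rightarrow> (nat \<Rightarrow> nat) \<Rightarrow> (nat \<Rightarrow> real) \<Rightarrow> nat \<Rightarrow> real" where
  "pbar c d b pup l = (if l \<le> c - d then pup (b l) else 0)"

definition pA :: "(nat \<Rightarrow> nat) \<Rightarrow> (nat \<Rightarrow> real) \<Rightarrow> nat \<Rightarrow> nat \<Rightarrow> real" where
  "pA a plow e' u = (\<Sum>l = e'..e' + u - 1. plow (a l))"

definition pB :: "nat \<Rightarrow> nat \<Rightarrow> nat \<Rightarrow> (nat \<Rightarrow> nat) \<Rightarrow> (nat \<Rightarrow> real) \<Rightarrow> nat \<Rightarrow> nat \<Rightarrow> real" where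
  "pB c d k b pup e' v = (let s = k - e' + 1 in (\<Sum>l = s - v + 1..s. pbar c d b pup l))"

definition cert_cond ::
  "nat \<Rightarrow> nat \<Rightarrow> nat \<Rightarrow> nat \<Rightarrow> real \<Rightarrow> real \<Rightarrow> (nat \<Rightarrow> nat) \<Rightarrow> (nat \<Rightarrow> nat) \<Rightarrow>
   (nat \<Rightarrow> real) \<Rightarrow> (nat \<Rightarrow> real) \<Rightarrow> nat \<Rightarrow> bool" where
  "cert_cond c d k k' \<sigma> R a b plow pup e' \<longleftrightarrow>
     (let \<eta> = d - e' + 1; s = k - e' + 1 in
      max (Phi_shift (plow (a e')) (- R / \<sigma>))
          (Max ((\<lambda>u. real k' / real u * Phi_shift (pA a plow e' u / real k') (- R / \<sigma>)) ` {1..\<eta>}))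
      > min (Phi_shift (pbar c d b pup s) (R / \<sigma>))
          (Min ((\<lambda>v. real k' / real v * Phi_shift (pB c d k b pup e' v / real k') (R / \<sigma>)) ` {1..s})))"

definition cert_e ::
  "nat \<Rightarrow> nat \<Rightarrow> nat \<Rightarrow> nat \<Rightarrow> real \<Rightarrow> real \<Rightarrow> (nat \<Rightarrow> nat) \<Rightarrow> (nat \<Rightarrow> nat) \<Rightarrow>
   (nat \<Rightarrow> real) \<Rightarrow> (nat \<Rightarrow> real) \<Rightarrow> nat" where
  "cert_e c d k k' \<sigma> R a b plow pup =
     Max ({0} \<union> {e' \<in> {1..min d k}. cert_cond c d k k' \<sigma> R a b plow pup e'})"

end

theory Submission
  imports Defs
begin

text \<open>
  Each label probability at \<open>z\<close> is the Gaussian expectation of a \<open>[0,1]\<close>-valued function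
  evaluated at \<open>z + \<epsilon>\<close>. By the Neyman--Pearson lemma, among all such functions with a given
  expectation \<open>p\<close> at \<open>x\<close>, the indicator of a half-space orthogonal to \<open>\<delta>\<close> has the smallest
  (resp. largest) expectation at \<open>x + \<delta>\<close>, which gives
  \<open>\<Phi>(\<Phi>\<^sup>-\<^sup>1(p) - \<parallel>\<delta>\<parallel>/\<sigma>) \<le> p(x + \<delta>) \<le> \<Phi>(\<Phi>\<^sup>-\<^sup>1(p) + \<parallel>\<delta>\<parallel>/\<sigma>)\<close>.
  Applied to one indicator this bounds a single label probability; applied to the sum of \<open>u\<close>
  indicators divided by \<open>k'\<close> (a \<open>[0,1]\<close>-valued function because \<open>f\<close> outputs exactly \<open>k'\<close>
  labels) it bounds the sum of \<open>u\<close> label probabilities, and by averaging some single one of them.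

  If fewer than \<open>e'\<close> labels of \<open>L\<close> were returned at \<open>x + \<delta>\<close>, then at least \<open>d - e' + 1\<close>
  labels of \<open>L\<close> are missed and at least \<open>k - e' + 1\<close> labels outside \<open>L\<close> are returned. Since
  the bounds are sorted, every \<open>u\<close> missed labels have lower bounds summing to at least
  \<open>pA u\<close>, and every \<open>v\<close> returned ones have upper bounds summing to at most \<open>pB v\<close>. This yields
  a missed label whose probability is at least the left-hand side of the certification
  condition and a returned one whose probability is at most the right-hand side, contradicting
  the ranking performed by \<open>g\<^sub>k\<close>.
\<close>

section \<open>The isotropic Gaussian measure\<close>

definition normal_measure :: "real \<Rightarrow> real measure" where
  "normal_measure \<sigma> = density lborel (\<lambda>x. ennreal (normal_density 0 \<sigma> x))"

lemma prob_space_normal_measure: "\<sigma> > 0 \<Longrightarrow> prob_space (normal_measure \<sigma>)"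
  unfolding normal_measure_def by (rule prob_space_normal_density)

lemma sets_normal_measure [measurable_cong, simp]: "sets (normal_measure \<sigma>) = sets borel"
  by (simp add: normal_measure_def)

definition gauss_density :: "real \<Rightarrow> 'a::euclidean_space \<Rightarrow> real" where
  "gauss_density \<sigma> y = (2 * pi * \<sigma>\<^sup>2) powr (- real DIM('a) / 2) * exp (- (norm y)\<^sup>2 / (2 * \<sigma>\<^sup>2))"

lemma gauss_density_pos: "\<sigma> > 0 \<Longrightarrow> gauss_density \<sigma> y > 0"
  by (simp add: gauss_density_def)

lemma borel_measurable_gauss_density [measurable]: "gauss_density \<sigma> \<in> borel_measurable borel"
  unfolding gauss_density_def by measurable

lemma gauss_eq_density: "gauss \<sigma> = density lborel (\<lambda>y. ennreal (gauss_density \<sigma> y))"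
  by (simp add: gauss_def gauss_density_def)

lemma sets_gauss [measurable_cong, simp]: "sets (gauss \<sigma>) = sets borel"
  by (simp add: gauss_def)

lemma space_gauss [simp]: "space (gauss \<sigma>) = UNIV"
  by (simp add: gauss_def)

lemma gauss_density_coordinates:
  fixes f :: "'a::euclidean_space \<Rightarrow> real"
  assumes "\<sigma> > 0"
  shows "gauss_density \<sigma> (\<Sum>b\<in>Basis. f b *\<^sub>R b) = (\<Prod>b\<in>(Basis::'a set). normal_density 0 \<sigma> (f b))"
proof -
  have norm_sq: "(norm (\<Sum>b\<in>(Basis::'a set). f b *\<^sub>R b))\<^sup>2 = (\<Sum>b\<in>Basis. (f b)\<^sup>2)"
    by (subst norm_sum_Pythagorean) (auto simp: pairwise_def orthogonal_def inner_Basis)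
  have pos: "2 * pi * \<sigma>\<^sup>2 > 0"
    using assms by simp
  have powr_eq: "((2 * pi * \<sigma>\<^sup>2) powr (- 1 / 2)) ^ DIM('a) = (2 * pi * \<sigma>\<^sup>2) powr (- real DIM('a) / 2)"
  proof -
    have "((2 * pi * \<sigma>\<^sup>2) powr (- 1 / 2)) ^ DIM('a) = ((2 * pi * \<sigma>\<^sup>2) powr (- 1 / 2)) powr real DIM('a)"
      using pos by (subst powr_realpow) auto
    then show ?thesis
      by (simp add: powr_powr)
  qed
  have "(\<Prod>b\<in>(Basis::'a set). normal_density 0 \<sigma> (f b))
      = (\<Prod>b\<in>(Basis::'a set). (2 * pi * \<sigma>\<^sup>2) powr (- 1 / 2) * exp (- (f b)\<^sup>2 / (2 * \<sigma>\<^sup>2)))"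
    using pos by (intro prod.cong refl) (simp add: normal_density_def powr_minus_divide powr_half_sqrt)
  also have "\<dots> = ((2 * pi * \<sigma>\<^sup>2) powr (- 1 / 2)) ^ DIM('a) * exp (\<Sum>b\<in>(Basis::'a set). - (f b)\<^sup>2 / (2 * \<sigma>\<^sup>2))"
    by (simp add: prod.distrib exp_sum)
  also have "(\<Sum>b\<in>(Basis::'a set). - (f b)\<^sup>2 / (2 * \<sigma>\<^sup>2)) = - (\<Sum>b\<in>Basis. (f b)\<^sup>2) / (2 * \<sigma>\<^sup>2)"
    by (simp add: sum_divide_distrib sum_negf)
  finally show ?thesis
    using powr_eq by (simp add: gauss_density_def norm_sq)
qed

lemma indicator_PiE_eq_prod:
  assumes "f \<in> extensional I" "finite I"
  shows "indicator (Pi\<^sub>E I A) f = (\<Prod>i\<in>I. indicator (A i) (f i) :: ennreal)"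
  using assms by (cases "f \<in> Pi I A") (auto simp: indicator_def PiE_def prod_zero_iff intro!: prod.neutral)

lemma density_PiM_normal:
  assumes "\<sigma> > 0"
  shows "density (PiM (Basis::'a::euclidean_space set) (\<lambda>_. lborel))
           (\<lambda>f. \<Prod>b\<in>Basis. ennreal (normal_density 0 \<sigma> (f b))) = PiM Basis (\<lambda>_. normal_measure \<sigma>)"
proof -
  interpret N: prob_space "normal_measure \<sigma>"
    using assms by (rule prob_space_normal_measure)
  interpret P: product_sigma_finite "\<lambda>_::'a. normal_measure \<sigma>" ..
  interpret L: product_sigma_finite "\<lambda>_::'a. lborel::real measure" ..
  show ?thesis
  proof (rule P.PiM_eqI)
    fix A assume A: "\<And>i. i \<in> (Basis::'a set) \<Longrightarrow> A i \<in> sets (normal_measure \<sigma>)"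
    have "Pi\<^sub>E Basis A \<in> sets (Pi\<^sub>M (Basis::'a set) (\<lambda>_. lborel))"
      using A by (intro sets_PiM_I_finite) auto
    then have "emeasure (density (Pi\<^sub>M Basis (\<lambda>_. lborel)) (\<lambda>f. \<Prod>b\<in>Basis. ennreal (normal_density 0 \<sigma> (f b)))) (Pi\<^sub>E Basis A)
      = (\<integral>\<^sup>+f. (\<Prod>b\<in>Basis. ennreal (normal_density 0 \<sigma> (f b)) * indicator (A b) (f b)) \<partial>Pi\<^sub>M (Basis::'a set) (\<lambda>_. lborel))"
      by (subst emeasure_density)
         (auto intro!: nn_integral_cong simp: space_PiM PiE_iff indicator_PiE_eq_prod prod.distrib)
    also have "\<dots> = (\<Prod>b\<in>Basis. (\<integral>\<^sup>+x. ennreal (normal_density 0 \<sigma> x) * indicator (A b) x \<partial>lborel))"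
      using A by (subst L.product_nn_integral_prod) auto
    also have "\<dots> = (\<Prod>b\<in>Basis. emeasure (normal_measure \<sigma>) (A b))"
      using A by (intro prod.cong refl) (simp add: normal_measure_def emeasure_density)
    finally show "emeasure (density (Pi\<^sub>M Basis (\<lambda>_. lborel)) (\<lambda>f. \<Prod>b\<in>Basis. ennreal (normal_density 0 \<sigma> (f b)))) (Pi\<^sub>E Basis A)
      = (\<Prod>b\<in>Basis. emeasure (normal_measure \<sigma>) (A b))" .
  qed (simp_all cong: sets_PiM_cong)
qed

lemma gauss_eq_distr_PiM:
  assumes "\<sigma> > 0"
  shows "(gauss \<sigma> :: 'a::euclidean_space measure)
           = distr (PiM Basis (\<lambda>_. normal_measure \<sigma>)) borel (\<lambda>f. \<Sum>b\<in>Basis. f b *\<^sub>R b)"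
proof -
  let ?P = "PiM (Basis::'a set) (\<lambda>_. lborel::real measure)"
  let ?coords = "\<lambda>f. \<Sum>b\<in>(Basis::'a set). f b *\<^sub>R b"
  have "(gauss \<sigma> :: 'a measure) = density (distr ?P borel ?coords) (\<lambda>y. ennreal (gauss_density \<sigma> y))"
    unfolding gauss_eq_density by (subst lborel_eq[where 'a='a]) simp
  also have "\<dots> = distr (density ?P (\<lambda>f. ennreal (gauss_density \<sigma> (?coords f)))) borel ?coords"
    by (rule density_distr) auto
  also have "(\<lambda>f. ennreal (gauss_density \<sigma> (?coords f))) = (\<lambda>f. \<Prod>b\<in>Basis. ennreal (normal_density 0 \<sigma> (f b)))"
    using assms by (simp add: gauss_density_coordinates prod_ennreal)
  finally show ?thesis
    by (simp add: density_PiM_normal[OF assms])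
qed

lemma prob_space_gauss: "\<sigma> > 0 \<Longrightarrow> prob_space (gauss \<sigma> :: 'a::euclidean_space measure)"
  by (simp add: gauss_eq_distr_PiM prob_space.prob_space_distr prob_space_PiM prob_space_normal_measure)

lemma distr_PiM_normal_component:
  assumes "\<sigma> > 0" "i \<in> I" "sets M = sets borel"
  shows "distr (PiM I (\<lambda>_. normal_measure \<sigma>)) M (\<lambda>\<omega>. \<omega> i) = normal_measure \<sigma>"
proof -
  have "distr (PiM I (\<lambda>_. normal_measure \<sigma>)) M (\<lambda>\<omega>. \<omega> i)
      = distr (PiM I (\<lambda>_. normal_measure \<sigma>)) (normal_measure \<sigma>) (\<lambda>\<omega>. \<omega> i)"
    using assms(3) by (intro distr_cong) auto
  also have "\<dots> = normal_measure \<sigma>"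
    using assms by (intro distr_PiM_component) (auto simp: prob_space_normal_measure)
  finally show ?thesis .
qed

lemma indep_vars_PiM_normal:
  assumes "\<sigma> > 0"
  shows "prob_space.indep_vars (PiM (Basis::'a::euclidean_space set) (\<lambda>_. normal_measure \<sigma>))
           (\<lambda>_. borel) (\<lambda>b \<omega>. \<omega> b) Basis"
proof -
  let ?\<Pi> = "PiM (Basis::'a set) (\<lambda>_. normal_measure \<sigma>)"
  interpret prob_space ?\<Pi>
    using assms by (simp add: prob_space_PiM prob_space_normal_measure)
  have "distr ?\<Pi> (Pi\<^sub>M Basis (\<lambda>_. borel)) (\<lambda>\<omega>. \<lambda>b\<in>Basis. \<omega> b) = distr ?\<Pi> ?\<Pi> (\<lambda>\<omega>. \<omega>)"
    by (intro distr_cong refl sets_PiM_cong) (auto simp: space_PiM PiE_def extensional_restrict)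
  also have "\<dots> = Pi\<^sub>M Basis (\<lambda>b. distr ?\<Pi> borel (\<lambda>\<omega>. \<omega> b))"
    using assms by (simp add: distr_PiM_normal_component cong: PiM_cong)
  finally show ?thesis
    by (subst indep_vars_iff_distr_eq_PiM') auto
qed

lemma PiM_normal_inner_distributed:
  assumes \<sigma>: "\<sigma> > 0" and u: "u \<noteq> (0::'a::euclidean_space)"
  shows "distributed (PiM (Basis::'a set) (\<lambda>_. normal_measure \<sigma>)) lborel
           (\<lambda>\<omega>. (\<Sum>b\<in>Basis. \<omega> b *\<^sub>R b) \<bullet> u) (\<lambda>x. ennreal (normal_density 0 (\<sigma> * norm u) x))"
proof -
  let ?\<Pi> = "PiM (Basis::'a set) (\<lambda>_. normal_measure \<sigma>)"
  interpret prob_space ?\<Pi>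
    using \<sigma> by (simp add: prob_space_PiM prob_space_normal_measure)
  \<comment> \<open>Only the coordinates with \<open>b \<bullet> u \<noteq> 0\<close> contribute; \<open>sum_indep_normal\<close> needs nondegenerate summands.\<close>
  define I where "I = {b\<in>(Basis::'a set). b \<bullet> u \<noteq> 0}"
  have "I \<noteq> {}"
    using u euclidean_all_zero_iff[of u] by (auto simp: I_def inner_commute)
  have indep: "indep_vars (\<lambda>_. borel) (\<lambda>b \<omega>. (b \<bullet> u) * \<omega> b) I"
    using indep_vars_subset[OF indep_vars_PiM_normal[OF \<sigma>], of I]
    by (rule indep_vars_compose2[where Y="\<lambda>b x. (b \<bullet> u) * x"]) (auto simp: I_def)
  have "distributed ?\<Pi> lborel (\<lambda>\<omega>. (b \<bullet> u) * \<omega> b) (normal_density 0 (\<bar>b \<bullet> u\<bar> * \<sigma>))" if "b \<in> I" for b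
  proof -
    have "distributed ?\<Pi> lborel (\<lambda>\<omega>. \<omega> b) (\<lambda>x. ennreal (normal_density 0 \<sigma> x))"
      using that distr_PiM_normal_component[OF \<sigma> _ sets_lborel, of b Basis]
      by (auto simp: I_def distributed_def normal_measure_def)
    from normal_density_affine[OF this \<sigma>, of "b \<bullet> u" 0] that show ?thesis
      by (auto simp: I_def)
  qed
  then have "distributed ?\<Pi> lborel (\<lambda>\<omega>. \<Sum>b\<in>I. (b \<bullet> u) * \<omega> b)
      (normal_density (\<Sum>b\<in>I. 0) (sqrt (\<Sum>b\<in>I. (\<bar>b \<bullet> u\<bar> * \<sigma>)\<^sup>2)))"
    using \<sigma> \<open>I \<noteq> {}\<close> indep by (intro sum_indep_normal) (auto simp: I_def)
  moreover have "(\<Sum>b\<in>I. (\<bar>b \<bullet> u\<bar> * \<sigma>)\<^sup>2) = (\<sigma> * norm u)\<^sup>2"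
  proof -
    have "(\<Sum>b\<in>I. (\<bar>b \<bullet> u\<bar> * \<sigma>)\<^sup>2) = (\<Sum>b\<in>Basis. (b \<bullet> u)\<^sup>2 * \<sigma>\<^sup>2)"
      by (rule sum.mono_neutral_cong_left) (auto simp: I_def power_mult_distrib)
    also have "\<dots> = \<sigma>\<^sup>2 * (u \<bullet> u)"
      by (subst euclidean_inner[of u u]) (simp add: sum_distrib_left power2_eq_square inner_commute mult.commute)
    finally show ?thesis
      by (simp add: power_mult_distrib power2_norm_eq_inner)
  qed
  moreover have "(\<Sum>b\<in>Basis. \<omega> b *\<^sub>R b) \<bullet> u = (\<Sum>b\<in>I. (b \<bullet> u) * \<omega> b)" for \<omega> :: "'a \<Rightarrow> real"
  proof -
    have "(\<Sum>b\<in>Basis. \<omega> b *\<^sub>R b) \<bullet> u = (\<Sum>b\<in>Basis. (b \<bullet> u) * \<omega> b)"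
      by (simp add: inner_sum_left mult.commute)
    also have "\<dots> = (\<Sum>b\<in>I. (b \<bullet> u) * \<omega> b)"
      by (rule sum.mono_neutral_right) (auto simp: I_def)
    finally show ?thesis .
  qed
  ultimately show ?thesis
    using \<sigma> by simp
qed

lemma gauss_inner_distributed:
  assumes "\<sigma> > 0" "u \<noteq> (0::'a::euclidean_space)"
  shows "distributed (gauss \<sigma> :: 'a measure) lborel (\<lambda>\<epsilon>. \<epsilon> \<bullet> u)
           (\<lambda>x. ennreal (normal_density 0 (\<sigma> * norm u) x))"
  using PiM_normal_inner_distributed[OF assms]
  unfolding distributed_def gauss_eq_distr_PiM[OF assms(1)]
  by (auto simp: distr_distr comp_def)

lemma measure_gauss_halfspace:
  assumes \<sigma>: "\<sigma> > 0" and u: "u \<noteq> (0::'a::euclidean_space)"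
  shows "measure (gauss \<sigma>) {\<epsilon>. \<epsilon> \<bullet> u \<le> c} = Phi (c / (\<sigma> * norm u))"
proof -
  let ?X = "\<lambda>\<epsilon>::'a. \<epsilon> \<bullet> u / (\<sigma> * norm u)"
  interpret prob_space "gauss \<sigma> :: 'a measure"
    using \<sigma> by (rule prob_space_gauss)
  have \<tau>: "\<sigma> * norm u > 0"
    using \<sigma> u by simp
  have "distributed (gauss \<sigma>) lborel ?X (\<lambda>x. ennreal (std_normal_density x))"
    using normal_standard_normal_convert[OF \<tau>] gauss_inner_distributed[OF \<sigma> u] by simp
  then have distr_eq: "distr (gauss \<sigma>) lborel ?X = density lborel std_normal_density"
    and meas: "?X \<in> measurable (gauss \<sigma>) lborel"
    unfolding distributed_def by auto
  have "{\<epsilon>. \<epsilon> \<bullet> u \<le> c} = ?X -` {..c / (\<sigma> * norm u)} \<inter> space (gauss \<sigma>)"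
    using \<tau> by (auto simp: divide_le_cancel)
  then have "measure (gauss \<sigma>) {\<epsilon>. \<epsilon> \<bullet> u \<le> c} = measure (distr (gauss \<sigma>) lborel ?X) {..c / (\<sigma> * norm u)}"
    using meas by (simp add: measure_distr)
  also have "\<dots> = Phi (c / (\<sigma> * norm u))"
    by (simp add: distr_eq Phi_def cdf_def)
  finally show ?thesis .
qed

section \<open>The standard normal distribution function\<close>

interpretation std_normal: real_distribution "density lborel std_normal_density"
proof -
  interpret prob_space "density lborel std_normal_density"
    by (rule prob_space_normal_density) simp
  show "real_distribution (density lborel std_normal_density)"
    by unfold_locales simp
qed

lemma strict_mono_Phi: "strict_mono Phi"
proof
  fix x y :: real assume "x < y"
  have pos: "std_normal_density z \<noteq> 0" for z
    using normal_density_pos[of 1 0 z] by simp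
  have "emeasure (density lborel std_normal_density) {x<..y} \<noteq> 0"
  proof
    assume "emeasure (density lborel std_normal_density) {x<..y} = 0"
    then have "emeasure lborel {z \<in> space lborel. ennreal (std_normal_density z) * indicator {x<..y} z \<noteq> 0} = 0"
      by (simp add: emeasure_density nn_integral_0_iff)
    moreover have "{z \<in> space lborel. ennreal (std_normal_density z) * indicator {x<..y} z \<noteq> 0} = {x<..y}"
      using pos by (auto simp: indicator_def)
    ultimately show False
      using \<open>x < y\<close> by simp
  qed
  moreover have "Phi y - Phi x = measure (density lborel std_normal_density) {x<..y}"
    unfolding Phi_def using \<open>x < y\<close> by (rule std_normal.cdf_diff_eq)
  ultimately show "Phi x < Phi y"
    by (metis std_normal.emeasure_eq_measure diff_gt_0_iff_gt ennreal_0 less_eq_real_def measure_nonneg)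
qed

lemma Phi_le_iff: "Phi x \<le> Phi y \<longleftrightarrow> x \<le> y"
  by (rule strict_mono_less_eq[OF strict_mono_Phi])

lemma Phi_less_iff: "Phi x < Phi y \<longleftrightarrow> x < y"
  by (rule strict_mono_less[OF strict_mono_Phi])

lemma isCont_Phi: "isCont Phi x"
proof -
  have "{x} \<in> null_sets (density lborel std_normal_density)"
  proof (rule iffD2[OF null_sets_density_iff], simp, rule conjI)
    show "AE y in lborel. y \<in> {x} \<longrightarrow> ennreal (std_normal_density y) = 0"
      using AE_lborel_singleton[of x] by eventually_elim auto
  qed simp
  then have "emeasure (density lborel std_normal_density) {x} = 0"
    by auto
  then show ?thesis
    unfolding Phi_def by (subst std_normal.isCont_cdf) (simp add: std_normal.emeasure_eq_measure)
qed

lemma Phi_at_bot: "(Phi \<longlongrightarrow> 0) at_bot"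
  unfolding Phi_def by (rule std_normal.cdf_lim_at_bot)

lemma Phi_at_top: "(Phi \<longlongrightarrow> 1) at_top"
  unfolding Phi_def by (rule std_normal.cdf_lim_at_top_prob)

lemma Phi_gt_0: "0 < Phi x"
  using std_normal.cdf_nonneg[of "x - 1"] Phi_less_iff[of "x - 1" x] by (simp add: Phi_def)

lemma Phi_less_1: "Phi x < 1"
  using std_normal.cdf_bounded_prob[of "x + 1"] Phi_less_iff[of x "x + 1"] by (simp add: Phi_def)

lemma Phi_surj:
  assumes "0 < p" "p < 1"
  shows "\<exists>x. Phi x = p"
proof -
  obtain a where a: "Phi a < p"
    using eventually_happens[OF order_tendstoD(2)[OF Phi_at_bot assms(1)]] by auto
  obtain b where b: "p < Phi b"
    using eventually_happens[OF order_tendstoD(1)[OF Phi_at_top assms(2)]] by auto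
  have "a \<le> b"
    using a b Phi_le_iff[of b a] by linarith
  then show ?thesis
    using IVT[of Phi a p b] a b isCont_Phi by auto
qed

lemma Phi_Phi_inv: "0 < p \<Longrightarrow> p < 1 \<Longrightarrow> Phi (Phi_inv p) = p"
  unfolding Phi_inv_def using Phi_surj strict_mono_eq[OF strict_mono_Phi] by (metis (mono_tags) theI)

lemma Phi_inv_mono: "0 < p \<Longrightarrow> p \<le> q \<Longrightarrow> q < 1 \<Longrightarrow> Phi_inv p \<le> Phi_inv q"
  by (metis Phi_Phi_inv Phi_le_iff le_less_trans less_le_trans)

lemma Phi_shift_mono:
  assumes "p \<le> p'" "t \<le> t'"
  shows "Phi_shift p t \<le> Phi_shift p' t'"
proof (cases "0 < p \<and> p' < 1")
  case True
  then have "Phi_inv p + t \<le> Phi_inv p' + t'"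
    using assms by (intro add_mono Phi_inv_mono) auto
  then show ?thesis
    using True assms by (simp add: Phi_shift_def Phi_le_iff)
qed (use assms Phi_gt_0 Phi_less_1 in \<open>auto simp: Phi_shift_def less_imp_le\<close>)

lemma Phi_shift_zero: "0 \<le> p \<Longrightarrow> p \<le> 1 \<Longrightarrow> Phi_shift p 0 = p"
  unfolding Phi_shift_def by (auto simp: Phi_Phi_inv)

lemma Phi_shift_le_of_Phi_le:
  assumes bound: "\<And>t. Phi t \<le> p \<Longrightarrow> Phi (t - r) \<le> q" and "0 \<le> q"
  shows "Phi_shift p (- r) \<le> q"
proof -
  consider "p \<le> 0" | "0 < p" "p < 1" | "1 \<le> p"
    by linarith
  then show ?thesis
  proof cases
    case 3
    \<comment> \<open>every \<open>t\<close> is admissible, so \<open>q\<close> bounds \<open>\<Phi>\<close> and hence its limit \<open>1\<close>\<close>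
    have "Phi t \<le> q" for t
      using bound[of "t + r"] Phi_less_1[of "t + r"] 3 by simp
    then have "1 \<le> q"
      by (intro tendsto_le[OF trivial_limit_at_top_linorder tendsto_const Phi_at_top]) auto
    then show ?thesis
      using 3 by (simp add: Phi_shift_def)
  qed (use assms Phi_Phi_inv in \<open>auto simp: Phi_shift_def\<close>)
qed

lemma Phi_shift_inverse:
  assumes "q \<le> 1" and "Phi_shift q (- t) \<le> p"
  shows "q \<le> Phi_shift p t"
proof -
  consider "p \<le> 0" | "0 < p" "p < 1" | "1 \<le> p"
    by linarith
  then show ?thesis
  proof cases
    case 2
    show ?thesis
    proof (cases "0 < q \<and> q < 1")
      case True
      then have "Phi (Phi_inv q - t) \<le> Phi (Phi_inv p)"
        using assms(2) 2 by (simp add: Phi_shift_def Phi_Phi_inv)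
      then have "Phi (Phi_inv q) \<le> Phi (Phi_inv p + t)"
        by (simp add: Phi_le_iff)
      then show ?thesis
        using True 2 by (simp add: Phi_shift_def Phi_Phi_inv)
    qed (use assms 2 Phi_gt_0[of "Phi_inv p + t"] in \<open>auto simp: Phi_shift_def\<close>)
  qed (use assms Phi_gt_0[of "Phi_inv q - t"] in \<open>auto simp: Phi_shift_def split: if_splits\<close>)
qed

section \<open>Shifting the Gaussian: the Neyman--Pearson bound\<close>

lemma integral_gauss_shift:
  fixes g :: "'a::euclidean_space \<Rightarrow> real"
  assumes "\<sigma> > 0" and [measurable]: "g \<in> borel_measurable borel"
  shows "(\<integral>\<epsilon>. g (x + \<epsilon>) \<partial>gauss \<sigma>) = (\<integral>z. gauss_density \<sigma> (z - x) * g z \<partial>lborel)"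
proof -
  have "(\<integral>\<epsilon>. g (x + \<epsilon>) \<partial>gauss \<sigma>) = (\<integral>\<epsilon>. (\<lambda>z. gauss_density \<sigma> (z - x) * g z) (x + \<epsilon>) \<partial>lborel)"
    unfolding gauss_eq_density using assms
    by (subst integral_density) (auto simp: less_imp_le[OF gauss_density_pos])
  also have "\<dots> = (\<integral>z. gauss_density \<sigma> (z - x) * g z \<partial>distr lborel borel ((+) x))"
    by (subst integral_distr) auto
  finally show ?thesis
    by (simp add: lborel_distr_plus)
qed

lemma integrable_gauss_density_shift:
  fixes x :: "'a::euclidean_space"
  assumes "\<sigma> > 0"
  shows "integrable lborel (\<lambda>z. gauss_density \<sigma> (z - x))"
proof -
  interpret prob_space "gauss \<sigma> :: 'a measure"
    using assms by (rule prob_space_gauss)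
  have "integrable (gauss \<sigma> :: 'a measure) (\<lambda>_. 1::real)"
    by simp
  then have "integrable lborel (\<lambda>\<epsilon>. (\<lambda>z. gauss_density \<sigma> (z - x)) (x + \<epsilon>))"
    unfolding gauss_eq_density using assms
    by (subst (asm) integrable_density) (auto simp: less_imp_le[OF gauss_density_pos])
  then have "integrable (distr lborel borel ((+) x)) (\<lambda>z. gauss_density \<sigma> (z - x))"
    by (subst integrable_distr_eq) auto
  then show ?thesis
    by (simp add: lborel_distr_plus)
qed

lemma gauss_density_diff:
  fixes y d :: "'a::euclidean_space"
  shows "gauss_density \<sigma> (y - d) = gauss_density \<sigma> y * exp ((2 * (y \<bullet> d) - (norm d)\<^sup>2) / (2 * \<sigma>\<^sup>2))"
proof -
  have expand: "- (norm (y - d))\<^sup>2 = - (norm y)\<^sup>2 + (2 * (y \<bullet> d) - (norm d)\<^sup>2)"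
    by (simp add: power2_norm_eq_inner inner_diff_left inner_diff_right inner_commute)
  have "- (norm (y - d))\<^sup>2 / (2 * \<sigma>\<^sup>2) = - (norm y)\<^sup>2 / (2 * \<sigma>\<^sup>2) + (2 * (y \<bullet> d) - (norm d)\<^sup>2) / (2 * \<sigma>\<^sup>2)"
    unfolding expand by (rule add_divide_distrib)
  then show ?thesis
    unfolding gauss_density_def by (simp only: exp_add mult.assoc)
qed

lemma integrable_mult_bounded:
  fixes \<rho> h :: "'a \<Rightarrow> real"
  assumes "integrable M \<rho>" "h \<in> borel_measurable M" "\<And>z. \<bar>h z\<bar> \<le> 1"
  shows "integrable M (\<lambda>z. \<rho> z * h z)"
proof (rule Bochner_Integration.integrable_bound[OF assms(1)])
  show "(\<lambda>z. \<rho> z * h z) \<in> borel_measurable M"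
    using assms(1,2) by (auto dest: borel_measurable_integrable)
  show "AE z in M. norm (\<rho> z * h z) \<le> norm (\<rho> z)"
    using assms(3) by (auto simp: abs_mult intro!: mult_left_le)
qed

lemma neyman_pearson:
  fixes \<rho>\<^sub>0 \<rho>\<^sub>1 h :: "'a \<Rightarrow> real"
  assumes int: "integrable M \<rho>\<^sub>0" "integrable M \<rho>\<^sub>1"
    and h: "h \<in> borel_measurable M" "\<And>z. 0 \<le> h z \<and> h z \<le> 1"
    and A: "A \<in> sets M" and w: "0 \<le> w"
    and inside: "\<And>z. z \<in> A \<Longrightarrow> \<rho>\<^sub>1 z \<le> w * \<rho>\<^sub>0 z"
    and outside: "\<And>z. z \<notin> A \<Longrightarrow> w * \<rho>\<^sub>0 z \<le> \<rho>\<^sub>1 z"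
    and mass: "(\<integral>z. \<rho>\<^sub>0 z * indicator A z \<partial>M) \<le> (\<integral>z. \<rho>\<^sub>0 z * h z \<partial>M)"
  shows "(\<integral>z. \<rho>\<^sub>1 z * indicator A z \<partial>M) \<le> (\<integral>z. \<rho>\<^sub>1 z * h z \<partial>M)"
proof -
  have h_abs: "\<And>z. \<bar>h z\<bar> \<le> 1" and A_abs: "\<And>z. \<bar>indicator A z :: real\<bar> \<le> 1"
    using h(2) by (auto simp: abs_le_iff indicator_def)
  have A_meas: "indicator A \<in> borel_measurable M"
    using A by simp
  note integrable = integrable_mult_bounded[OF int(1) h(1) h_abs] integrable_mult_bounded[OF int(1) A_meas A_abs]
    integrable_mult_bounded[OF int(2) h(1) h_abs] integrable_mult_bounded[OF int(2) A_meas A_abs]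
  have pointwise: "0 \<le> (\<rho>\<^sub>1 z * h z - \<rho>\<^sub>1 z * indicator A z) - w * (\<rho>\<^sub>0 z * h z - \<rho>\<^sub>0 z * indicator A z)" for z
  proof (cases "z \<in> A")
    case True
    have "0 \<le> (1 - h z) * (w * \<rho>\<^sub>0 z - \<rho>\<^sub>1 z)"
      using h(2)[of z] inside[OF True] by simp
    then show ?thesis
      using True by (simp add: algebra_simps)
  next
    case False
    have "0 \<le> h z * (\<rho>\<^sub>1 z - w * \<rho>\<^sub>0 z)"
      using h(2)[of z] outside[OF False] by simp
    then show ?thesis
      using False by (simp add: algebra_simps)
  qed
  have "0 \<le> (\<integral>z. (\<rho>\<^sub>1 z * h z - \<rho>\<^sub>1 z * indicator A z) - w * (\<rho>\<^sub>0 z * h z - \<rho>\<^sub>0 z * indicator A z) \<partial>M)"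
    using pointwise by (intro integral_nonneg_AE) auto
  also have "\<dots> = ((\<integral>z. \<rho>\<^sub>1 z * h z \<partial>M) - (\<integral>z. \<rho>\<^sub>1 z * indicator A z \<partial>M))
      - w * ((\<integral>z. \<rho>\<^sub>0 z * h z \<partial>M) - (\<integral>z. \<rho>\<^sub>0 z * indicator A z \<partial>M))"
    using integrable by (simp add: Bochner_Integration.integral_diff)
  finally show ?thesis
    using mult_nonneg_nonneg[OF w, of "(\<integral>z. \<rho>\<^sub>0 z * h z \<partial>M) - (\<integral>z. \<rho>\<^sub>0 z * indicator A z \<partial>M)"] mass
    by linarith
qed

lemma integral_gauss_density_halfspace:
  fixes x y v :: "'a::euclidean_space"
  assumes "\<sigma> > 0" "v \<noteq> 0"
  shows "(\<integral>z. gauss_density \<sigma> (z - y) * indicator {z. (z - x) \<bullet> v \<le> c} z \<partial>lborel)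
           = Phi ((c - (y - x) \<bullet> v) / (\<sigma> * norm v))"
proof -
  have "(\<integral>z. gauss_density \<sigma> (z - y) * indicator {z. (z - x) \<bullet> v \<le> c} z \<partial>lborel)
      = (\<integral>\<epsilon>. indicator {z. (z - x) \<bullet> v \<le> c} (y + \<epsilon>) \<partial>gauss \<sigma>)"
    using assms by (subst integral_gauss_shift) auto
  also have "\<dots> = (\<integral>\<epsilon>. indicator {\<epsilon>. \<epsilon> \<bullet> v \<le> c - (y - x) \<bullet> v} \<epsilon> \<partial>gauss \<sigma>)"
    by (intro Bochner_Integration.integral_cong refl) (auto simp: indicator_def inner_diff_left inner_add_left)
  also have "\<dots> = measure (gauss \<sigma>) {\<epsilon>. \<epsilon> \<bullet> v \<le> c - (y - x) \<bullet> v}"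
    by simp
  finally show ?thesis
    using measure_gauss_halfspace[OF assms] by simp
qed

text \<open>The extremal test is the half-space \<open>(z - x) \<bullet> \<delta> \<le> \<sigma> \<parallel>\<delta>\<parallel> t\<close>, whose mass is \<open>\<Phi>(t)\<close> at \<open>x\<close>.\<close>
lemma gauss_density_shift_bound:
  fixes h :: "'a::euclidean_space \<Rightarrow> real"
  assumes \<sigma>: "\<sigma> > 0" and \<delta>: "\<delta> \<noteq> 0"
    and h: "h \<in> borel_measurable borel" "\<And>z. 0 \<le> h z \<and> h z \<le> 1"
    and t: "Phi t \<le> (\<integral>z. gauss_density \<sigma> (z - x) * h z \<partial>lborel)"
  shows "Phi (t - norm \<delta> / \<sigma>) \<le> (\<integral>z. gauss_density \<sigma> (z - (x + \<delta>)) * h z \<partial>lborel)"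
proof -
  have h_lborel: "h \<in> borel_measurable lborel"
    using h(1) by simp
  define r where "r = norm \<delta>"
  define c where "c = \<sigma> * r * t"
  define A where "A = {z. (z - x) \<bullet> \<delta> \<le> c}"
  define w where "w = exp ((2 * c - r\<^sup>2) / (2 * \<sigma>\<^sup>2))"
  have r: "r > 0"
    using \<delta> by (simp add: r_def)
  have ratio: "gauss_density \<sigma> (z - (x + \<delta>)) = exp ((2 * ((z - x) \<bullet> \<delta>) - r\<^sup>2) / (2 * \<sigma>\<^sup>2)) * gauss_density \<sigma> (z - x)" for z
    using gauss_density_diff[of \<sigma> "z - x" \<delta>] by (simp add: r_def diff_diff_eq mult.commute)
  have exp_mono: "exp ((2 * a - r\<^sup>2) / (2 * \<sigma>\<^sup>2)) * gauss_density \<sigma> (z - x)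
      \<le> exp ((2 * b - r\<^sup>2) / (2 * \<sigma>\<^sup>2)) * gauss_density \<sigma> (z - x)" if "a \<le> b" for z a b
    using that \<sigma> less_imp_le[OF gauss_density_pos[OF \<sigma>]] by (intro mult_right_mono) (auto intro: divide_right_mono)
  have "(\<integral>z. gauss_density \<sigma> (z - (x + \<delta>)) * indicator A z \<partial>lborel) \<le> (\<integral>z. gauss_density \<sigma> (z - (x + \<delta>)) * h z \<partial>lborel)"
  proof (rule neyman_pearson[where w=w, OF integrable_gauss_density_shift[OF \<sigma>] integrable_gauss_density_shift[OF \<sigma>] h_lborel h(2)])
    show "(\<integral>z. gauss_density \<sigma> (z - x) * indicator A z \<partial>lborel) \<le> (\<integral>z. gauss_density \<sigma> (z - x) * h z \<partial>lborel)"
      using t integral_gauss_density_halfspace[OF \<sigma> \<delta>, of x x c] \<sigma> r by (simp add: A_def c_def r_def)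
  qed (auto simp: A_def w_def ratio intro!: exp_mono)
  moreover have "(c - (x + \<delta> - x) \<bullet> \<delta>) / (\<sigma> * norm \<delta>) = t - r / \<sigma>"
    using \<sigma> r by (simp add: c_def r_def field_simps power2_norm_eq_inner[symmetric] power2_eq_square)
  ultimately show ?thesis
    using integral_gauss_density_halfspace[OF \<sigma> \<delta>, of "x + \<delta>" x c] by (simp add: A_def r_def)
qed

lemma expectation_unit_interval:
  assumes "prob_space M" "f \<in> borel_measurable M" "\<And>z. 0 \<le> f z \<and> f z \<le> (1::real)"
  shows "0 \<le> (\<integral>z. f z \<partial>M)" "(\<integral>z. f z \<partial>M) \<le> 1"
proof -
  interpret prob_space M
    by fact
  have "integrable M f"
    using assms by (intro integrable_const_bound[where B=1]) auto
  then show "0 \<le> (\<integral>z. f z \<partial>M)" "(\<integral>z. f z \<partial>M) \<le> 1"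
    using assms(3) by (auto intro!: integral_nonneg_AE integral_le_const)
qed

lemma expectation_gauss_shift_lower:
  fixes h :: "'a::euclidean_space \<Rightarrow> real"
  assumes \<sigma>: "\<sigma> > 0" and h: "h \<in> borel_measurable borel" "\<And>z. 0 \<le> h z \<and> h z \<le> 1"
  shows "Phi_shift (\<integral>\<epsilon>. h (x + \<epsilon>) \<partial>gauss \<sigma>) (- norm \<delta> / \<sigma>) \<le> (\<integral>\<epsilon>. h (x + \<delta> + \<epsilon>) \<partial>gauss \<sigma>)"
proof -
  have unit: "0 \<le> (\<integral>\<epsilon>. h (y + \<epsilon>) \<partial>gauss \<sigma>)" "(\<integral>\<epsilon>. h (y + \<epsilon>) \<partial>gauss \<sigma>) \<le> 1" for y
    using h by (intro expectation_unit_interval prob_space_gauss[OF \<sigma>]; simp)+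
  show ?thesis
  proof (cases "\<delta> = 0")
    case True
    then show ?thesis
      using unit[of x] by (simp add: Phi_shift_zero)
  next
    case False
    have "Phi_shift (\<integral>\<epsilon>. h (x + \<epsilon>) \<partial>gauss \<sigma>) (- (norm \<delta> / \<sigma>)) \<le> (\<integral>\<epsilon>. h (x + \<delta> + \<epsilon>) \<partial>gauss \<sigma>)"
    proof (rule Phi_shift_le_of_Phi_le)
      fix t assume "Phi t \<le> (\<integral>\<epsilon>. h (x + \<epsilon>) \<partial>gauss \<sigma>)"
      then show "Phi (t - norm \<delta> / \<sigma>) \<le> (\<integral>\<epsilon>. h (x + \<delta> + \<epsilon>) \<partial>gauss \<sigma>)"
        using gauss_density_shift_bound[OF \<sigma> False h]
        by (simp add: integral_gauss_shift[OF \<sigma> h(1), of x] integral_gauss_shift[OF \<sigma> h(1), of "x + \<delta>"])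
    qed (rule unit)
    then show ?thesis
      by simp
  qed
qed

text \<open>The upper bound is the lower bound read backwards from \<open>x + \<delta>\<close> to \<open>x\<close>.\<close>
lemma expectation_gauss_shift_upper:
  fixes h :: "'a::euclidean_space \<Rightarrow> real"
  assumes \<sigma>: "\<sigma> > 0" and h: "h \<in> borel_measurable borel" "\<And>z. 0 \<le> h z \<and> h z \<le> 1"
  shows "(\<integral>\<epsilon>. h (x + \<delta> + \<epsilon>) \<partial>gauss \<sigma>) \<le> Phi_shift (\<integral>\<epsilon>. h (x + \<epsilon>) \<partial>gauss \<sigma>) (norm \<delta> / \<sigma>)"
proof (rule Phi_shift_inverse)
  show "(\<integral>\<epsilon>. h (x + \<delta> + \<epsilon>) \<partial>gauss \<sigma>) \<le> 1"
    using h by (intro expectation_unit_interval prob_space_gauss[OF \<sigma>]) simp_all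
  show "Phi_shift (\<integral>\<epsilon>. h (x + \<delta> + \<epsilon>) \<partial>gauss \<sigma>) (- (norm \<delta> / \<sigma>)) \<le> (\<integral>\<epsilon>. h (x + \<epsilon>) \<partial>gauss \<sigma>)"
    using expectation_gauss_shift_lower[OF \<sigma> h, of "x + \<delta>" "- \<delta>"] by simp
qed

lemma label_prob_eq_expectation:
  fixes f :: "'a::euclidean_space \<Rightarrow> nat set"
  shows "label_prob f \<sigma> z i = (\<integral>\<epsilon>. indicator {w. i \<in> f w} (z + \<epsilon>) \<partial>gauss \<sigma>)"
proof -
  have "(\<integral>\<epsilon>. indicator {w. i \<in> f w} (z + \<epsilon>) \<partial>gauss \<sigma>) = (\<integral>\<epsilon>. indicator {\<epsilon>. i \<in> f (z + \<epsilon>)} \<epsilon> \<partial>(gauss \<sigma> :: 'a measure) :: real)"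
    by (intro Bochner_Integration.integral_cong) (auto simp: indicator_def)
  also have "\<dots> = measure (gauss \<sigma>) {\<epsilon>. i \<in> f (z + \<epsilon>)}"
    by simp
  finally show ?thesis
    by (simp add: label_prob_def)
qed

lemma label_prob_shift_bounds:
  fixes f :: "'a::euclidean_space \<Rightarrow> nat set"
  assumes \<sigma>: "\<sigma> > 0" and f_meas: "\<forall>i. {w. i \<in> f w} \<in> sets borel"
  shows "Phi_shift (label_prob f \<sigma> x i) (- norm \<delta> / \<sigma>) \<le> label_prob f \<sigma> (x + \<delta>) i"
    and "label_prob f \<sigma> (x + \<delta>) i \<le> Phi_shift (label_prob f \<sigma> x i) (norm \<delta> / \<sigma>)"
proof -
  have [measurable]: "{w. i \<in> f w} \<in> sets borel"
    using f_meas by blast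
  show "Phi_shift (label_prob f \<sigma> x i) (- norm \<delta> / \<sigma>) \<le> label_prob f \<sigma> (x + \<delta>) i"
    "label_prob f \<sigma> (x + \<delta>) i \<le> Phi_shift (label_prob f \<sigma> x i) (norm \<delta> / \<sigma>)"
    unfolding label_prob_eq_expectation
    by (intro expectation_gauss_shift_lower expectation_gauss_shift_upper \<sigma>; simp)+
qed

text \<open>
  Since \<open>f\<close> returns exactly \<open>k'\<close> labels, \<open>1/k'\<close> times the number of labels of \<open>U\<close> it returns
  is a \<open>[0,1]\<close>-valued function whose expectation is the average label probability over \<open>U\<close>.
\<close>
lemma sum_label_prob_shift_bounds:
  fixes f :: "'a::euclidean_space \<Rightarrow> nat set"
  assumes \<sigma>: "\<sigma> > 0" and f_meas: "\<forall>i. {w. i \<in> f w} \<in> sets borel"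
    and f_card: "\<forall>w. finite (f w) \<and> card (f w) = k'" and k': "1 \<le> k'" and U: "finite U"
  shows "real k' * Phi_shift ((\<Sum>i\<in>U. label_prob f \<sigma> x i) / k') (- norm \<delta> / \<sigma>) \<le> (\<Sum>i\<in>U. label_prob f \<sigma> (x + \<delta>) i)"
    and "(\<Sum>i\<in>U. label_prob f \<sigma> (x + \<delta>) i) \<le> real k' * Phi_shift ((\<Sum>i\<in>U. label_prob f \<sigma> x i) / k') (norm \<delta> / \<sigma>)"
proof -
  interpret prob_space "gauss \<sigma> :: 'a measure"
    using \<sigma> by (rule prob_space_gauss)
  have [measurable]: "{w. i \<in> f w} \<in> sets borel" for i
    using f_meas by blast
  define h where "h w = (\<Sum>i\<in>U. indicator {w. i \<in> f w} w) / real k'" for w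
  have h_meas: "h \<in> borel_measurable borel"
    unfolding h_def by measurable
  have h_unit: "0 \<le> h w \<and> h w \<le> 1" for w
  proof -
    have "(\<Sum>i\<in>U. indicator {w. i \<in> f w} w :: real) = real (card (U \<inter> {i. i \<in> f w}))"
      using U by (simp add: indicator_def)
    also have "\<dots> \<le> real k'"
      using f_card card_mono[of "f w" "U \<inter> {i. i \<in> f w}"] by auto
    finally show ?thesis
      using k' by (simp add: h_def sum_nonneg)
  qed
  have expectation: "(\<integral>\<epsilon>. h (z + \<epsilon>) \<partial>gauss \<sigma>) = (\<Sum>i\<in>U. label_prob f \<sigma> z i) / k'" for z
  proof -
    have "integrable (gauss \<sigma>) (\<lambda>\<epsilon>. indicator {w. i \<in> f w} (z + \<epsilon>) :: real)" for i
      by (intro integrable_const_bound[where B=1]) auto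
    then show ?thesis
      by (simp add: h_def label_prob_eq_expectation)
  qed
  have k'_pos: "real k' > 0"
    using k' by simp
  show "real k' * Phi_shift ((\<Sum>i\<in>U. label_prob f \<sigma> x i) / k') (- norm \<delta> / \<sigma>) \<le> (\<Sum>i\<in>U. label_prob f \<sigma> (x + \<delta>) i)"
    using expectation_gauss_shift_lower[OF \<sigma> h_meas h_unit, of x \<delta>] k'_pos
    by (simp add: expectation[of x] expectation[of "x + \<delta>"] pos_le_divide_eq mult.commute)
  show "(\<Sum>i\<in>U. label_prob f \<sigma> (x + \<delta>) i) \<le> real k' * Phi_shift ((\<Sum>i\<in>U. label_prob f \<sigma> x i) / k') (norm \<delta> / \<sigma>)"
    using expectation_gauss_shift_upper[OF \<sigma> h_meas h_unit, of x \<delta>] k'_pos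
    by (simp add: expectation[of x] expectation[of "x + \<delta>"] pos_divide_le_eq mult.commute)
qed

section \<open>Partial sums of sorted bounds\<close>

lemma sum_le_sum_of_threshold:
  fixes g :: "'b \<Rightarrow> real"
  assumes "finite U" "finite B" "card U = card B"
    and above: "\<And>l. l \<in> U - B \<Longrightarrow> \<theta> \<le> g l" and below: "\<And>l. l \<in> B - U \<Longrightarrow> g l \<le> \<theta>"
  shows "sum g B \<le> sum g U"
proof -
  have "card (U - B) = card (B - U)"
    using assms(1-3) by (simp add: card_Diff_subset_Int Int_commute)
  then have "sum g (B - U) \<le> sum g (U - B)"
    using sum_bounded_above[of "B - U" g \<theta>] sum_bounded_below[of "U - B" \<theta> g] above below by simp
  then show ?thesis
    using assms(1,2) sum.Int_Diff[of U g B] sum.Int_Diff[of B g U] by (simp add: Int_commute)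
qed

lemma exists_ge_average:
  fixes q :: "'b \<Rightarrow> real"
  assumes "finite U" "U \<noteq> {}" "y * real (card U) \<le> sum q U"
  shows "\<exists>i\<in>U. y \<le> q i"
proof (rule ccontr)
  assume "\<not> (\<exists>i\<in>U. y \<le> q i)"
  then have "sum q U < of_nat (card U) * y"
    using assms(1,2) by (intro sum_bounded_above_strict) (auto simp: card_gt_0_iff)
  with assms(3) show False
    by (simp add: mult.commute)
qed

lemma exists_le_average:
  fixes q :: "'b \<Rightarrow> real"
  assumes "finite U" "U \<noteq> {}" "sum q U \<le> y * real (card U)"
  shows "\<exists>i\<in>U. q i \<le> y"
  using exists_ge_average[of U "- y" "\<lambda>i. - q i"] assms by (auto simp: sum_negf)

lemma ex_ge_max_Max:
  fixes q :: "'b \<Rightarrow> real"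
  assumes "finite A" "A \<noteq> {}" "\<exists>i\<in>S. \<alpha> \<le> q i" "\<forall>y\<in>A. \<exists>i\<in>S. y \<le> q i"
  shows "\<exists>i\<in>S. max \<alpha> (Max A) \<le> q i"
  using Max_in[OF assms(1,2)] assms(3,4) by (auto simp: max_def)

lemma ex_le_min_Min:
  fixes q :: "'b \<Rightarrow> real"
  assumes "finite A" "A \<noteq> {}" "\<exists>j\<in>T. q j \<le> \<beta>" "\<forall>y\<in>A. \<exists>j\<in>T. q j \<le> y"
  shows "\<exists>j\<in>T. q j \<le> min \<beta> (Min A)"
  using Min_in[OF assms(1,2)] assms(3,4) by (auto simp: min_def)

lemma exists_subset_sum_ge_sorted_block:
  fixes g :: "'b \<Rightarrow> real"
  assumes a: "bij_betw a {1..d} L"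
    and sorted: "\<forall>l\<in>{1..d}. \<forall>l'\<in>{1..d}. l \<le> l' \<longrightarrow> g (a l') \<le> g (a l)"
    and S: "S \<subseteq> L" "d - e' + 1 \<le> card S"
    and e': "1 \<le> e'" "e' \<le> d" and u: "1 \<le> u" "u \<le> d - e' + 1"
  shows "\<exists>U\<subseteq>S. card U = u \<and> (\<Sum>l = e'..e' + u - 1. g (a l)) \<le> sum g U"
proof -
  define N where "N = e' + u - 1"
  define J where "J = {l \<in> {1..N}. a l \<in> S}"
  have "S \<subseteq> a ` J \<union> a ` {N + 1..d}"
  proof
    fix i assume "i \<in> S"
    then obtain l where "l \<in> {1..d}" "a l = i"
      using S(1) a by (auto simp: bij_betw_def)
    then show "i \<in> a ` J \<union> a ` {N + 1..d}"
      using \<open>i \<in> S\<close> by (cases "l \<le> N") (auto simp: J_def)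
  qed
  then have "card S \<le> card (a ` J \<union> a ` {N + 1..d})"
    by (intro card_mono) (auto simp: J_def)
  also have "\<dots> \<le> card J + card {N + 1..d}"
    by (rule order_trans[OF card_Un_le add_mono[OF card_image_le card_image_le]]) (auto simp: J_def)
  finally have "u \<le> card J"
    using S(2) u e' by (simp add: N_def)
  then obtain U' where U': "U' \<subseteq> J" "card U' = u"
    by (meson obtain_subset_with_card_n)
  have U'_sub: "U' \<subseteq> {1..N}" "U' \<subseteq> {1..d}"
    using U'(1) u e' by (auto simp: J_def N_def)
  have "(\<Sum>l = e'..N. g (a l)) \<le> (\<Sum>l\<in>U'. g (a l))"
  proof (rule sum_le_sum_of_threshold[where \<theta> = "g (a e')"])
    show "finite U'" "card U' = card {e'..N}"
      using U'(2) U'_sub u e' finite_subset by (auto simp: N_def)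
    show "g (a e') \<le> g (a l)" if "l \<in> U' - {e'..N}" for l
      using that U'_sub sorted e' by auto
    show "g (a l) \<le> g (a e')" if "l \<in> {e'..N} - U'" for l
      using that sorted e' u by (auto simp: N_def)
  qed simp
  moreover have "inj_on a U'"
    using a U'_sub(2) by (auto simp: bij_betw_def intro: inj_on_subset)
  ultimately show ?thesis
    using U' by (intro exI[of _ "a ` U'"]) (auto simp: J_def N_def sum.reindex card_image)
qed

lemma exists_subset_sum_le_sorted_block:
  fixes g :: "'b \<Rightarrow> real"
  assumes b: "bij_betw b {1..n} M"
    and sorted: "\<forall>l\<in>{1..n}. \<forall>l'\<in>{1..n}. l \<le> l' \<longrightarrow> g (b l') \<le> g (b l)"
    and T: "T \<subseteq> M" "s \<le> card T" and v: "1 \<le> v" "v \<le> s"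
  shows "\<exists>V\<subseteq>T. card V = v \<and> sum g V \<le> (\<Sum>l = s - v + 1..s. g (b l))"
proof -
  have "finite M"
    using bij_betw_finite[OF b] by simp
  then have "s \<le> n"
    using T card_mono[OF _ T(1)] bij_betw_same_card[OF b] by simp
  define m where "m = s - v + 1"
  define J where "J = {l \<in> {m..n}. b l \<in> T}"
  have "T \<subseteq> b ` J \<union> b ` {1..m - 1}"
  proof
    fix j assume "j \<in> T"
    then obtain l where "l \<in> {1..n}" "b l = j"
      using T(1) b by (auto simp: bij_betw_def)
    then show "j \<in> b ` J \<union> b ` {1..m - 1}"
      using \<open>j \<in> T\<close> by (cases "m \<le> l") (auto simp: J_def)
  qed
  then have "card T \<le> card (b ` J \<union> b ` {1..m - 1})"
    by (intro card_mono) (auto simp: J_def)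
  also have "\<dots> \<le> card J + card {1..m - 1}"
    by (rule order_trans[OF card_Un_le add_mono[OF card_image_le card_image_le]]) (auto simp: J_def)
  finally have "v \<le> card J"
    using T(2) v by (simp add: m_def)
  then obtain V' where V': "V' \<subseteq> J" "card V' = v"
    by (meson obtain_subset_with_card_n)
  have V'_sub: "V' \<subseteq> {m..n}" "V' \<subseteq> {1..n}"
    using V'(1) by (auto simp: J_def m_def)
  have "(\<Sum>l\<in>V'. g (b l)) \<le> (\<Sum>l = m..s. g (b l))"
  proof (rule sum_le_sum_of_threshold[where \<theta> = "g (b s)"])
    show "finite V'" "card {m..s} = card V'"
      using V'(2) V'_sub v finite_subset by (auto simp: m_def)
    show "g (b s) \<le> g (b l)" if "l \<in> {m..s} - V'" for l
      using that sorted \<open>s \<le> n\<close> v by (auto simp: m_def)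
    show "g (b l) \<le> g (b s)" if "l \<in> V' - {m..s}" for l
      using that V'_sub sorted \<open>s \<le> n\<close> v by auto
  qed simp
  moreover have "inj_on b V'"
    using b V'_sub(2) by (auto simp: bij_betw_def intro: inj_on_subset)
  ultimately show ?thesis
    using V' by (intro exI[of _ "b ` V'"]) (auto simp: J_def m_def sum.reindex card_image)
qed

lemma exists_label_prob_ge_shifted_average:
  fixes f :: "'a::euclidean_space \<Rightarrow> nat set"
  assumes \<sigma>: "\<sigma> > 0" and f_meas: "\<forall>i. {w. i \<in> f w} \<in> sets borel"
    and f_card: "\<forall>w. finite (f w) \<and> card (f w) = k'" and k': "1 \<le> k'" and \<delta>: "norm \<delta> \<le> R"
    and U: "finite U" "U \<noteq> {}" and P: "P \<le> (\<Sum>i\<in>U. label_prob f \<sigma> x i)"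
  shows "\<exists>i\<in>U. real k' / real (card U) * Phi_shift (P / real k') (- R / \<sigma>) \<le> label_prob f \<sigma> (x + \<delta>) i"
proof (rule exists_ge_average[OF U])
  have "P / real k' \<le> (\<Sum>i\<in>U. label_prob f \<sigma> x i) / real k'"
    by (rule divide_right_mono[OF P]) simp
  moreover have "- R / \<sigma> \<le> - norm \<delta> / \<sigma>"
    using \<delta> \<sigma> by (simp add: divide_right_mono)
  ultimately have "real k' * Phi_shift (P / real k') (- R / \<sigma>)
      \<le> real k' * Phi_shift ((\<Sum>i\<in>U. label_prob f \<sigma> x i) / real k') (- norm \<delta> / \<sigma>)"
    by (intro mult_left_mono Phi_shift_mono) simp_all
  also have "\<dots> \<le> (\<Sum>i\<in>U. label_prob f \<sigma> (x + \<delta>) i)"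
    by (rule sum_label_prob_shift_bounds(1)[OF \<sigma> f_meas f_card k' U(1)])
  finally show "real k' / real (card U) * Phi_shift (P / real k') (- R / \<sigma>) * real (card U)
      \<le> (\<Sum>i\<in>U. label_prob f \<sigma> (x + \<delta>) i)"
    using U by simp
qed

lemma exists_label_prob_le_shifted_average:
  fixes f :: "'a::euclidean_space \<Rightarrow> nat set"
  assumes \<sigma>: "\<sigma> > 0" and f_meas: "\<forall>i. {w. i \<in> f w} \<in> sets borel"
    and f_card: "\<forall>w. finite (f w) \<and> card (f w) = k'" and k': "1 \<le> k'" and \<delta>: "norm \<delta> \<le> R"
    and V: "finite V" "V \<noteq> {}" and P: "(\<Sum>j\<in>V. label_prob f \<sigma> x j) \<le> P"
  shows "\<exists>j\<in>V. label_prob f \<sigma> (x + \<delta>) j \<le> real k' / real (card V) * Phi_shift (P / real k') (R / \<sigma>)"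
proof (rule exists_le_average[OF V])
  have "(\<Sum>j\<in>V. label_prob f \<sigma> (x + \<delta>) j)
      \<le> real k' * Phi_shift ((\<Sum>j\<in>V. label_prob f \<sigma> x j) / real k') (norm \<delta> / \<sigma>)"
    by (rule sum_label_prob_shift_bounds(2)[OF \<sigma> f_meas f_card k' V(1)])
  also have "\<dots> \<le> real k' * Phi_shift (P / real k') (R / \<sigma>)"
    using divide_right_mono[OF P, of "real k'"] \<delta> \<sigma>
    by (intro mult_left_mono Phi_shift_mono) (simp_all add: divide_right_mono)
  finally show "(\<Sum>j\<in>V. label_prob f \<sigma> (x + \<delta>) j)
      \<le> real k' / real (card V) * Phi_shift (P / real k') (R / \<sigma>) * real (card V)"
    using V by simp
qed

lemma smoothed_lower_witness:
  fixes f :: "'a::euclidean_space \<Rightarrow> nat set"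
  assumes \<sigma>: "\<sigma> > 0" and f_meas: "\<forall>i. {w. i \<in> f w} \<in> sets borel"
    and f_card: "\<forall>w. finite (f w) \<and> card (f w) = k'" and k': "1 \<le> k'" and \<delta>: "norm \<delta> \<le> R"
    and plow_le: "\<forall>i\<in>L. plow i \<le> label_prob f \<sigma> x i"
    and a_enum: "bij_betw a {1..d} L"
    and a_sorted: "\<forall>l\<in>{1..d}. \<forall>l'\<in>{1..d}. l \<le> l' \<longrightarrow> plow (a l') \<le> plow (a l)"
    and S: "S \<subseteq> L" "d - e' + 1 \<le> card S" and e': "1 \<le> e'" "e' \<le> d"
  shows "\<exists>i\<in>S. max (Phi_shift (plow (a e')) (- R / \<sigma>))
            (Max ((\<lambda>u. real k' / real u * Phi_shift (pA a plow e' u / real k') (- R / \<sigma>)) ` {1..d - e' + 1}))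
          \<le> label_prob f \<sigma> (x + \<delta>) i"
proof (rule ex_ge_max_Max)
  have shift: "- R / \<sigma> \<le> - norm \<delta> / \<sigma>"
    using \<delta> \<sigma> by (simp add: divide_right_mono)
  have block: "\<exists>U\<subseteq>S. card U = u \<and> pA a plow e' u \<le> (\<Sum>i\<in>U. label_prob f \<sigma> x i)"
    if u: "u \<in> {1..d - e' + 1}" for u
  proof -
    obtain U where U: "U \<subseteq> S" "card U = u" "pA a plow e' u \<le> sum plow U"
      using exists_subset_sum_ge_sorted_block[OF a_enum a_sorted S e', of u] u unfolding pA_def by auto
    have "sum plow U \<le> (\<Sum>i\<in>U. label_prob f \<sigma> x i)"
      using U(1) S(1) plow_le by (intro sum_mono) auto
    then show ?thesis
      using U by (intro exI[of _ U]) simp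
  qed
  show "\<exists>i\<in>S. Phi_shift (plow (a e')) (- R / \<sigma>) \<le> label_prob f \<sigma> (x + \<delta>) i"
  proof -
    obtain U where "U \<subseteq> S" "card U = 1" "pA a plow e' 1 \<le> (\<Sum>i\<in>U. label_prob f \<sigma> x i)"
      using block[of 1] by auto
    then obtain i where i: "i \<in> S" "plow (a e') \<le> label_prob f \<sigma> x i"
      by (auto simp: pA_def card_1_singleton_iff)
    have "Phi_shift (plow (a e')) (- R / \<sigma>) \<le> Phi_shift (label_prob f \<sigma> x i) (- norm \<delta> / \<sigma>)"
      using i(2) shift by (rule Phi_shift_mono)
    also have "\<dots> \<le> label_prob f \<sigma> (x + \<delta>) i"
      by (rule label_prob_shift_bounds(1)[OF \<sigma> f_meas])
    finally show ?thesis
      using i(1) by blast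
  qed
  show "\<forall>y\<in>(\<lambda>u. real k' / real u * Phi_shift (pA a plow e' u / real k') (- R / \<sigma>)) ` {1..d - e' + 1}.
      \<exists>i\<in>S. y \<le> label_prob f \<sigma> (x + \<delta>) i"
  proof
    fix y assume "y \<in> (\<lambda>u. real k' / real u * Phi_shift (pA a plow e' u / real k') (- R / \<sigma>)) ` {1..d - e' + 1}"
    then obtain u where u: "u \<in> {1..d - e' + 1}"
      and y: "y = real k' / real u * Phi_shift (pA a plow e' u / real k') (- R / \<sigma>)"
      by blast
    obtain U where U: "U \<subseteq> S" "card U = u" "pA a plow e' u \<le> (\<Sum>i\<in>U. label_prob f \<sigma> x i)"
      using block[OF u] by blast
    have "finite U" "U \<noteq> {}"
      using U(2) u card_gt_0_iff[of U] by auto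
    then show "\<exists>i\<in>S. y \<le> label_prob f \<sigma> (x + \<delta>) i"
      using exists_label_prob_ge_shifted_average[OF \<sigma> f_meas f_card k' \<delta> _ _ U(3)] U(1,2) y by blast
  qed
qed auto

lemma smoothed_upper_witness:
  fixes f :: "'a::euclidean_space \<Rightarrow> nat set"
  assumes \<sigma>: "\<sigma> > 0" and f_meas: "\<forall>i. {w. i \<in> f w} \<in> sets borel"
    and f_card: "\<forall>w. finite (f w) \<and> card (f w) = k'" and k': "1 \<le> k'" and \<delta>: "norm \<delta> \<le> R"
    and pup_ge: "\<forall>j\<in>{1..c} - L. label_prob f \<sigma> x j \<le> pup j"
    and b_enum: "bij_betw b {1..c - d} ({1..c} - L)"
    and b_sorted: "\<forall>l\<in>{1..c - d}. \<forall>l'\<in>{1..c - d}. l \<le> l' \<longrightarrow> pup (b l') \<le> pup (b l)"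
    and T: "T \<subseteq> {1..c} - L" "k - e' + 1 \<le> card T"
  shows "\<exists>j\<in>T. label_prob f \<sigma> (x + \<delta>) j \<le> min (Phi_shift (pbar c d b pup (k - e' + 1)) (R / \<sigma>))
            (Min ((\<lambda>v. real k' / real v * Phi_shift (pB c d k b pup e' v / real k') (R / \<sigma>)) ` {1..k - e' + 1}))"
proof (rule ex_le_min_Min)
  define s where "s = k - e' + 1"
  have shift: "norm \<delta> / \<sigma> \<le> R / \<sigma>"
    using \<delta> \<sigma> by (simp add: divide_right_mono)
  have "1 \<le> s"
    by (simp add: s_def)
  have "s \<le> c - d"
    using T card_mono[OF _ T(1)] bij_betw_same_card[OF b_enum] by (simp add: s_def)
  then have pB_eq: "pB c d k b pup e' v = (\<Sum>l = s - v + 1..s. pup (b l))" for v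
    by (simp add: pB_def pbar_def s_def)
  have block: "\<exists>V\<subseteq>T. card V = v \<and> (\<Sum>j\<in>V. label_prob f \<sigma> x j) \<le> pB c d k b pup e' v"
    if v: "v \<in> {1..s}" for v
  proof -
    obtain V where V: "V \<subseteq> T" "card V = v" "sum pup V \<le> pB c d k b pup e' v"
      using exists_subset_sum_le_sorted_block[OF b_enum b_sorted T(1), of s v] T(2) v
      unfolding pB_eq s_def by auto
    have "(\<Sum>j\<in>V. label_prob f \<sigma> x j) \<le> sum pup V"
      using V(1) T(1) pup_ge by (intro sum_mono) auto
    then show ?thesis
      using V by (intro exI[of _ V]) simp
  qed
  show "\<exists>j\<in>T. label_prob f \<sigma> (x + \<delta>) j \<le> Phi_shift (pbar c d b pup (k - e' + 1)) (R / \<sigma>)"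
  proof -
    obtain V where "V \<subseteq> T" "card V = 1" "(\<Sum>j\<in>V. label_prob f \<sigma> x j) \<le> pB c d k b pup e' 1"
      using block[of 1] by (auto simp: s_def)
    then obtain j where j: "j \<in> T" "label_prob f \<sigma> x j \<le> pbar c d b pup s"
      using \<open>s \<le> c - d\<close> \<open>1 \<le> s\<close> by (auto simp: pB_eq pbar_def card_1_singleton_iff)
    have "label_prob f \<sigma> (x + \<delta>) j \<le> Phi_shift (label_prob f \<sigma> x j) (norm \<delta> / \<sigma>)"
      by (rule label_prob_shift_bounds(2)[OF \<sigma> f_meas])
    also have "\<dots> \<le> Phi_shift (pbar c d b pup s) (R / \<sigma>)"
      using j(2) shift by (rule Phi_shift_mono)
    finally show ?thesis
      using j(1) by (auto simp: s_def)
  qed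
  show "\<forall>y\<in>(\<lambda>v. real k' / real v * Phi_shift (pB c d k b pup e' v / real k') (R / \<sigma>)) ` {1..k - e' + 1}.
      \<exists>j\<in>T. label_prob f \<sigma> (x + \<delta>) j \<le> y"
  proof
    fix y assume "y \<in> (\<lambda>v. real k' / real v * Phi_shift (pB c d k b pup e' v / real k') (R / \<sigma>)) ` {1..k - e' + 1}"
    then obtain v where v: "v \<in> {1..s}"
      and y: "y = real k' / real v * Phi_shift (pB c d k b pup e' v / real k') (R / \<sigma>)"
      by (auto simp: s_def)
    obtain V where V: "V \<subseteq> T" "card V = v" "(\<Sum>j\<in>V. label_prob f \<sigma> x j) \<le> pB c d k b pup e' v"
      using block[OF v] by blast
    have "finite V" "V \<noteq> {}"
      using V(2) v card_gt_0_iff[of V] by auto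
    then show "\<exists>j\<in>T. label_prob f \<sigma> (x + \<delta>) j \<le> y"
      using exists_label_prob_le_shifted_average[OF \<sigma> f_meas f_card k' \<delta> _ _ V(3)] V(1,2) y by blast
  qed
qed auto

lemma certified_labels_le_card_inter:
  fixes f :: "'a::euclidean_space \<Rightarrow> nat set"
  assumes \<sigma>: "\<sigma> > 0" and f_meas: "\<forall>i. {w. i \<in> f w} \<in> sets borel"
    and f_card: "\<forall>w. finite (f w) \<and> card (f w) = k'" and k': "1 \<le> k'"
    and L_sub: "L \<subseteq> {1..c}"
    and plow_le: "\<forall>i\<in>L. plow i \<le> label_prob f \<sigma> x i"
    and pup_ge: "\<forall>j\<in>{1..c} - L. label_prob f \<sigma> x j \<le> pup j"
    and a_enum: "bij_betw a {1..d} L"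
    and a_sorted: "\<forall>l\<in>{1..d}. \<forall>l'\<in>{1..d}. l \<le> l' \<longrightarrow> plow (a l') \<le> plow (a l)"
    and b_enum: "bij_betw b {1..c - d} ({1..c} - L)"
    and b_sorted: "\<forall>l\<in>{1..c - d}. \<forall>l'\<in>{1..c - d}. l \<le> l' \<longrightarrow> pup (b l') \<le> pup (b l)"
    and \<delta>: "norm \<delta> \<le> R" and G: "is_smoothed_output c f \<sigma> k (x + \<delta>) G"
    and e': "1 \<le> e'" "e' \<le> d" "e' \<le> k" and cert: "cert_cond c d k k' \<sigma> R a b plow pup e'"
  shows "e' \<le> card (L \<inter> G)"
proof (rule ccontr)
  assume "\<not> e' \<le> card (L \<inter> G)"
  have G_sub: "G \<subseteq> {1..c}" and G_card: "card G = k"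
    and ranked: "\<And>i j. j \<in> G \<Longrightarrow> i \<in> {1..c} - G \<Longrightarrow> label_prob f \<sigma> (x + \<delta>) i \<le> label_prob f \<sigma> (x + \<delta>) j"
    using G by (auto simp: is_smoothed_output_def)
  have "finite L" "finite G" "card L = d"
    using L_sub G_sub finite_subset bij_betw_same_card[OF a_enum] by auto
  then have missed: "d - e' + 1 \<le> card (L - G)" and added: "k - e' + 1 \<le> card (G - L)"
    using \<open>\<not> e' \<le> card (L \<inter> G)\<close> e' G_card by (simp_all add: card_Diff_subset_Int Int_commute)
  obtain i where i: "i \<in> L - G" and lower: "max (Phi_shift (plow (a e')) (- R / \<sigma>))
      (Max ((\<lambda>u. real k' / real u * Phi_shift (pA a plow e' u / real k') (- R / \<sigma>)) ` {1..d - e' + 1}))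
    \<le> label_prob f \<sigma> (x + \<delta>) i"
    using smoothed_lower_witness[OF \<sigma> f_meas f_card k' \<delta> plow_le a_enum a_sorted _ missed e'(1,2)] by blast
  obtain j where j: "j \<in> G - L" and upper: "label_prob f \<sigma> (x + \<delta>) j
    \<le> min (Phi_shift (pbar c d b pup (k - e' + 1)) (R / \<sigma>))
      (Min ((\<lambda>v. real k' / real v * Phi_shift (pB c d k b pup e' v / real k') (R / \<sigma>)) ` {1..k - e' + 1}))"
    using smoothed_upper_witness[OF \<sigma> f_meas f_card k' \<delta> pup_ge b_enum b_sorted _ added] G_sub by blast
  have "label_prob f \<sigma> (x + \<delta>) i \<le> label_prob f \<sigma> (x + \<delta>) j"
    using i j L_sub by (intro ranked) auto
  with lower upper cert show False
    unfolding cert_cond_def Let_def by linarith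
qed

theorem theorem1:
  fixes c k k' d :: nat and f :: "'a::euclidean_space \<Rightarrow> nat set"
    and \<sigma> R :: real and x :: 'a and L :: "nat set"
    and a b :: "nat \<Rightarrow> nat" and plow pup :: "nat \<Rightarrow> real"
  assumes c_ge: "c \<ge> 1"
    and f_range: "\<forall>w. f w \<subseteq> {1..c} \<and> card (f w) = k'"
    and f_meas: "\<forall>i. {w. i \<in> f w} \<in> sets borel"
    and k'_range: "1 \<le> k'" "k' \<le> c"
    and k_range: "1 \<le> k" "k \<le> c"
    and sigma_pos: "\<sigma> > 0"
    and L_sub: "L \<subseteq> {1..c}" and L_card: "card L = d" and d_pos: "d \<ge> 1"
    and plow_bounds: "\<forall>i\<in>L. 0 \<le> plow i \<and> plow i \<le> 1 \<and> plow i \<le> label_prob f \<sigma> x i"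
    and pup_bounds: "\<forall>j\<in>{1..c} - L. 0 \<le> pup j \<and> pup j \<le> 1 \<and> label_prob f \<sigma> x j \<le> pup j"
    and a_enum: "bij_betw a {1..d} L"
    and a_sorted: "\<forall>l\<in>{1..d}. \<forall>l'\<in>{1..d}. l \<le> l' \<longrightarrow> plow (a l') \<le> plow (a l)"
    and b_enum: "bij_betw b {1..c - d} ({1..c} - L)"
    and b_sorted: "\<forall>l\<in>{1..c - d}. \<forall>l'\<in>{1..c - d}. l \<le> l' \<longrightarrow> pup (b l') \<le> pup (b l)"
    and pB_bound: "\<forall>e'\<in>{1..min d k}. \<forall>v\<in>{1..k - e' + 1}. pB c d k b pup e' v \<le> real k'"
    and R_nonneg: "R \<ge> 0"
  shows "\<forall>\<delta>::'a. norm \<delta> \<le> R \<longrightarrow>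
           (\<forall>G. is_smoothed_output c f \<sigma> k (x + \<delta>) G \<longrightarrow>
                card (L \<inter> G) \<ge> cert_e c d k k' \<sigma> R a b plow pup)"
proof (intro allI impI)
  fix \<delta> :: 'a and G
  assume \<delta>: "norm \<delta> \<le> R" and G: "is_smoothed_output c f \<sigma> k (x + \<delta>) G"
  have f_card: "\<forall>w. finite (f w) \<and> card (f w) = k'"
    using f_range finite_subset[OF _ finite_atLeastAtMost] by blast
  have "e' \<le> card (L \<inter> G)" if "e' \<in> {1..min d k}" "cert_cond c d k k' \<sigma> R a b plow pup e'" for e'
    using certified_labels_le_card_inter[OF sigma_pos f_meas f_card k'_range(1) L_sub _ _
        a_enum a_sorted b_enum b_sorted \<delta> G] plow_bounds pup_bounds that
    by auto
  then show "cert_e c d k k' \<sigma> R a b plow pup \<le> card (L \<inter> G)"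
    unfolding cert_e_def by (intro Max.boundedI) auto
qed

end
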